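(* Let $\mathcal M=(M,\le,{}^\perp)$ be a complete orthomodular lattice, $L$ an involutive submonoid of $\mathbf{Lin}(\mathcal M)$ containing all Sasaki projections $\pi_m$ ($m\in M$), and $A\in\mathscr P(L)$. Then in $\mathscr P(L)$ one has ${\sim}{\sim}A=\{\pi_{\bigvee_{a\in A}a(1)}\}$.
   Context: For an orthomodular lattice and $m\in M$, $\pi_m(x)=m\wedge(m^\perp\vee x)$. A map $f\colon M\to M$ is linear if there is $g\colon M\to M$ (unique, written $f^*$) with $f(x)\le y^\perp\iff x\le g(y)^\perp$ for all $x,y\in M$. $\mathbf{Lin}(\mathcal M)$ is the set of linear maps, an involutive monoid under composition, $f\mapsto f^*$ and $\mathrm{id}_M$; each $\pi_m\in\mathbf{Lin}(\mathcal M)$ and $\pi_m^*=\pi_m$. For such $L$, $\mathscr P(L)$ denotes the powerset of $L$ with union, $A\odot B=\{a\circ b\mid a\in A,b\in B\}$, $A^*=\{a^*\mid a\in A\}$, unit $\{\mathrm{id}_M\}$ and ${\sim}A=\{\pi_{(\bigvee_{a\in A}a(1))^\perp}\}$; $1$ is the top of $M$. *)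

theory Defs
  imports "HOL-Library.Complemented_Lattices"
begin

text \<open>An orthomodular lattice is modelled by the type class complete_orthomodular_lattice;
  the orthocomplement x^perp is written - x, top is top.\<close>

definition sasaki :: "'a::orthomodular_lattice \<Rightarrow> 'a \<Rightarrow> 'a" where
  "sasaki m x = inf m (sup (- m) x)"

definition is_adjoint :: "('a::orthomodular_lattice \<Rightarrow> 'a) \<Rightarrow> ('a \<Rightarrow> 'a) \<Rightarrow> bool" where
  "is_adjoint f g \<longleftrightarrow> (\<forall>x y. f x \<le> - y \<longleftrightarrow> x \<le> - g y)"

definition Lin :: "('a::orthomodular_lattice \<Rightarrow> 'a) set" where
  "Lin = {f. \<exists>g. is_adjoint f g}"

definition adj :: "('a::orthomodular_lattice \<Rightarrow> 'a) \<Rightarrow> ('a \<Rightarrow> 'a)" where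
  "adj f = (THE g. is_adjoint f g)"

definition inv_submonoid_sasaki :: "('a::orthomodular_lattice \<Rightarrow> 'a) set \<Rightarrow> bool" where
  "inv_submonoid_sasaki L \<longleftrightarrow> L \<subseteq> Lin \<and> id \<in> L \<and> (\<forall>f\<in>L. \<forall>g\<in>L. f \<circ> g \<in> L)
     \<and> (\<forall>f\<in>L. adj f \<in> L) \<and> (\<forall>m. sasaki m \<in> L)"

definition pmult :: "('a \<Rightarrow> 'a) set \<Rightarrow> ('a \<Rightarrow> 'a) set \<Rightarrow> ('a \<Rightarrow> 'a) set" where
  "pmult A B = {a \<circ> b | a b. a \<in> A \<and> b \<in> B}"

definition pstar :: "('a::orthomodular_lattice \<Rightarrow> 'a) set \<Rightarrow> ('a \<Rightarrow> 'a) set" where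
  "pstar A = adj ` A"

definition pneg :: "('a::complete_orthomodular_lattice \<Rightarrow> 'a) set \<Rightarrow> ('a \<Rightarrow> 'a) set" where
  "pneg A = {sasaki (- (SUP a\<in>A. a top))}"

end

theory Submission
  imports Defs
begin

lemma sasaki_top [simp]: "sasaki m top = m"
  by (simp add: sasaki_def)

lemma pneg_sasaki: "pneg {sasaki m} = {sasaki (- m)}"
  by (simp add: pneg_def)

theorem lemma3p8:
  fixes L :: "('a::complete_orthomodular_lattice \<Rightarrow> 'a) set"
    and A :: "('a \<Rightarrow> 'a) set"
  assumes "inv_submonoid_sasaki L"
    and "A \<subseteq> L"
  shows "pneg (pneg A) = {sasaki (SUP a\<in>A. a top)}"
proof -
  have "pneg (pneg A) = pneg {sasaki (- (SUP a\<in>A. a top))}"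
    by (simp add: pneg_def)
  also have "\<dots> = {sasaki (SUP a\<in>A. a top)}"
    by (simp add: pneg_sasaki)
  finally show ?thesis .
qed

end
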